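(* Let $n\ge 1$ and consider the single-input single-output linear system \[ \dot x = A_0 x + b_y y + b_u u,\qquad y = c_0 x, \] with state $x(t)\in\mathbb{R}^n$, input $u$ and output $y$, where $c_0=[1,0,\dots,0]$, $A_0\in\mathbb{R}^{n\times n}$ is a strictly stable (Hurwitz) matrix in observable canonical form (i.e. $A_0$ has ones on the superdiagonal, first column equal to $-[\hat a_1,\dots,\hat a_n]^T$ and zeros elsewhere, so that its characteristic polynomial is $s^n+\hat a_1 s^{n-1}+\dots+\hat a_n$), and $b_y,b_u\in\mathbb{R}^n$ are constant vectors. Let $\theta_y(t),\theta_u(t)\in\mathbb{R}^n$ evolve according to \[ \dot\theta_y = A_0^T\theta_y + c_0^T y,\qquad \dot\theta_u = A_0^T\theta_u + c_0^T u, \] from arbitrary initial conditions. Let $C_0$ be the observability matrix of $(c_0,A_0)$, i.e. the matrix with rows $c_0, c_0A_0,\dots,c_0A_0^{n-1}$, and let $\Theta_y=[\theta_y,\ A_0^T\theta_y,\dots,(A_0^T)^{n-1}\theta_y]$ and $\Theta_u=[\theta_u,\ A_0^T\theta_u,\dots,(A_0^T)^{n-1}\theta_u]$ be the controllability matrices of $(A_0^T,\theta_y)$ and $(A_0^T,\theta_u)$. Define $E_y=C_0^{-1}\Theta_y^T$ and $E_u=C_0^{-1}\Theta_u^T$. Then $E_y b_y + E_u b_u$ converges to $x$ exponentially as $t\to\infty$.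
   Context: This setting arises from an $n$-th order strictly proper SISO plant with transfer function $\frac{b_1s^{n-1}+\dots+b_n}{s^n+a_1s^{n-1}+\dots+a_n}$ in observable canonical form, with $b_y=[\hat a_1-a_1,\dots,\hat a_n-a_n]^T$ and $b_u=[b_1,\dots,b_n]^T$; the lemma holds for any constant vectors $b_y,b_u$ as stated. *)

theory Defs
  imports Complex_Main "Jordan_Normal_Form.Char_Poly" "Jordan_Normal_Form.Gauss_Jordan_Elimination"
begin

text \<open>Observable canonical form: ones on the superdiagonal, first column equal to
  minus (ahat 0, ..., ahat (n-1)) (ahat i stands for the paper's coefficient with index i+1),
  zeros elsewhere.\<close>
definition obs_canon :: "nat \<Rightarrow> (nat \<Rightarrow> real) \<Rightarrow> real mat" where
  "obs_canon n ahat = mat n n (\<lambda>(i,j).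
      (if j = Suc i then 1 else 0) + (if j = 0 then - ahat i else 0))"

definition c0_vec :: "nat \<Rightarrow> real vec" where
  "c0_vec n = vec n (\<lambda>j. if j = 0 then 1 else 0)"

definition hurwitz :: "real mat \<Rightarrow> bool" where
  "hurwitz A \<longleftrightarrow> (\<forall>l. eigenvalue (map_mat complex_of_real A) l \<longrightarrow> Re l < 0)"

definition obsv_mat :: "nat \<Rightarrow> real vec \<Rightarrow> real mat \<Rightarrow> real mat" where
  "obsv_mat n c A = mat n n (\<lambda>(i,j). c \<bullet> col (A ^\<^sub>m i) j)"

definition ctrb_mat :: "nat \<Rightarrow> real mat \<Rightarrow> real vec \<Rightarrow> real mat" where
  "ctrb_mat n A b = mat n n (\<lambda>(i,j). ((A ^\<^sub>m j) *\<^sub>v b) $ i)"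

text \<open>Matrix inverse (the inverse exists for the observability matrix in question).\<close>
definition mat_inv :: "real mat \<Rightarrow> real mat" where
  "mat_inv A = the (mat_inverse A)"

end

theory Submission
  imports Defs "Jordan_Normal_Form.Schur_Decomposition"
begin

text \<open>
  Write \<open>C\<close> for the observability matrix of \<open>(c0, A0)\<close> and \<open>E(\<theta>) = C\<inverse> \<Theta>(\<theta>)\<^sup>T\<close>.
  The rows of \<open>\<Theta>(\<theta>)\<^sup>T\<close> are \<open>\<theta>\<^sup>T A0\<^sup>k\<close>, so \<open>\<Theta>(\<theta>)\<^sup>T\<close> is the observability matrix of
  \<open>(\<theta>, A0)\<close>; its product with \<open>b\<close> is linear in \<open>\<theta>\<close>, and \<open>\<Theta>(c0)\<^sup>T b = C b\<close>.
  Writing \<open>\<theta> = C\<^sup>T h\<close> gives \<open>\<Theta>(\<theta>)\<^sup>T = C p(A0)\<close> with \<open>p(X) = \<Sum>\<^sub>k h\<^sub>k X\<^sup>k\<close>, so \<open>E(\<theta>) = p(A0)\<close>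
  commutes with \<open>A0\<close>. Differentiating \<open>E(\<theta>) b\<close> along \<open>\<theta>' = A0\<^sup>T \<theta> + c0\<^sup>T w\<close> therefore gives
  \<open>A0 E(\<theta>) b + w b\<close>, and the error \<open>e = E\<^sub>y b\<^sub>y + E\<^sub>u b\<^sub>u - x\<close> satisfies \<open>e' = A0 e\<close> exactly.
  Since \<open>A0\<close> is Hurwitz, \<open>e\<close> decays exponentially: a Schur triangularisation of \<open>A0\<close> reduces
  this to scalar equations \<open>g' = \<lambda> g + h\<close> with \<open>Re \<lambda> < 0\<close> and \<open>h\<close> decaying, solved by back substitution.
\<close>

section \<open>Exponential decay\<close>

definition exp_decay :: "(real \<Rightarrow> 'a::real_normed_vector) \<Rightarrow> bool" where
  "exp_decay f \<longleftrightarrow> (\<exists>M \<alpha>. \<alpha> > 0 \<and> (\<forall>t\<ge>0. norm (f t) \<le> M * exp (- \<alpha> * t)))"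

lemma exp_decay_le:
  assumes "exp_decay f" and "\<And>t. t \<ge> 0 \<Longrightarrow> norm (g t) \<le> norm (f t)"
  shows "exp_decay g"
proof -
  obtain M a where "a > 0" and f: "\<forall>t\<ge>0. norm (f t) \<le> M * exp (- a * t)"
    using assms(1) unfolding exp_decay_def by blast
  have "norm (g t) \<le> M * exp (- a * t)" if "t \<ge> 0" for t
    using assms(2)[OF that] f that by fastforce
  with \<open>a > 0\<close> show ?thesis unfolding exp_decay_def by blast
qed

lemma exp_decay_zero: "exp_decay (\<lambda>t. 0)"
  unfolding exp_decay_def by (intro exI[of _ 0] exI[of _ 1]) simp

lemma exp_decay_add:
  assumes "exp_decay f" and "exp_decay g"
  shows "exp_decay (\<lambda>t. f t + g t)"
proof -
  obtain M1 a1 where a1: "a1 > 0" and f: "\<And>t. t \<ge> 0 \<Longrightarrow> norm (f t) \<le> M1 * exp (- a1 * t)"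
    using assms(1) unfolding exp_decay_def by blast
  obtain M2 a2 where a2: "a2 > 0" and g: "\<And>t. t \<ge> 0 \<Longrightarrow> norm (g t) \<le> M2 * exp (- a2 * t)"
    using assms(2) unfolding exp_decay_def by blast
  define a where "a = min a1 a2"
  have M1: "M1 \<ge> 0" using f[of 0] by simp (meson norm_ge_zero order_trans)
  have M2: "M2 \<ge> 0" using g[of 0] by simp (meson norm_ge_zero order_trans)
  have "norm (f t + g t) \<le> (M1 + M2) * exp (- a * t)" if "t \<ge> 0" for t
  proof -
    have "exp (- a1 * t) \<le> exp (- a * t)" "exp (- a2 * t) \<le> exp (- a * t)"
      using that by (simp_all add: a_def mult_right_mono)
    then have "M1 * exp (- a1 * t) + M2 * exp (- a2 * t) \<le> (M1 + M2) * exp (- a * t)"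
      using M1 M2 by (simp add: distrib_right add_mono mult_left_mono)
    then show ?thesis
      using norm_triangle_ineq[of "f t" "g t"] f[OF that] g[OF that] by linarith
  qed
  moreover have "a > 0" using a1 a2 by (simp add: a_def)
  ultimately show ?thesis unfolding exp_decay_def by blast
qed

lemma exp_decay_sum:
  assumes "\<And>i. i \<in> I \<Longrightarrow> exp_decay (f i)"
  shows "exp_decay (\<lambda>t. \<Sum>i\<in>I. f i t)"
  using assms by (induction I rule: infinite_finite_induct) (auto intro: exp_decay_zero exp_decay_add)

lemma exp_decay_cmult:
  fixes f :: "real \<Rightarrow> 'a::real_normed_div_algebra"
  assumes "exp_decay f"
  shows "exp_decay (\<lambda>t. c * f t)"
proof -
  obtain M a where "a > 0" and "\<forall>t\<ge>0. norm (f t) \<le> M * exp (- a * t)"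
    using assms unfolding exp_decay_def by blast
  then have "\<forall>t\<ge>0. norm (c * f t) \<le> (norm c * M) * exp (- a * t)"
    by (simp add: norm_mult mult.assoc mult_left_mono)
  with \<open>a > 0\<close> show ?thesis unfolding exp_decay_def by blast
qed

lemma exp_decay_exp: "a > 0 \<Longrightarrow> exp_decay (\<lambda>t. exp (- a * t))"
  unfolding exp_decay_def by (intro exI[of _ 1] exI[of _ a]) simp

lemma exp_decay_time_mult_exp:
  assumes "a > 0"
  shows "exp_decay (\<lambda>t. t * exp (- a * t))"
proof -
  have "t * exp (- a * t) \<le> (2 / a) * exp (- (a / 2) * t)" if "t \<ge> 0" for t
  proof -
    have "a * t / 2 \<le> exp (a * t / 2)" using exp_ge_add_one_self[of "a * t / 2"] by linarith
    then have "t \<le> (2 / a) * exp (a * t / 2)" using assms by (simp add: field_simps)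
    then have "t * exp (- a * t) \<le> (2 / a) * exp (a * t / 2) * exp (- a * t)"
      by (intro mult_right_mono) auto
    also have "\<dots> = (2 / a) * exp (- (a / 2) * t)"
      by (simp add: mult.assoc exp_add[symmetric])
    finally show ?thesis .
  qed
  then have "\<forall>t\<ge>0. norm (t * exp (- a * t)) \<le> (2 / a) * exp (- (a / 2) * t)"
    by simp
  moreover have "a / 2 > 0" using assms by simp
  ultimately show ?thesis unfolding exp_decay_def by blast
qed

lemma exp_decay_uniform:
  assumes "finite I" and "\<And>i. i \<in> I \<Longrightarrow> exp_decay (f i)"
  shows "\<exists>M \<alpha>. \<alpha> > 0 \<and> (\<forall>t\<ge>0. \<forall>i\<in>I. norm (f i t) \<le> M * exp (- \<alpha> * t))"
proof -
  have "exp_decay (\<lambda>t. \<Sum>i\<in>I. norm (f i t))"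
    using assms(2) by (intro exp_decay_sum) (auto simp: exp_decay_def)
  then obtain M \<alpha> where "\<alpha> > 0" and M: "\<forall>t\<ge>0. norm (\<Sum>i\<in>I. norm (f i t)) \<le> M * exp (- \<alpha> * t)"
    unfolding exp_decay_def by blast
  have "norm (f i t) \<le> M * exp (- \<alpha> * t)" if "t \<ge> 0" and "i \<in> I" for t i
  proof -
    have "norm (f i t) \<le> (\<Sum>i\<in>I. norm (f i t))"
      using that(2) assms(1) by (intro member_le_sum) auto
    also have "\<dots> = norm (\<Sum>i\<in>I. norm (f i t))" by (simp add: sum_nonneg)
    also have "\<dots> \<le> M * exp (- \<alpha> * t)" using M that(1) by blast
    finally show ?thesis .
  qed
  with \<open>\<alpha> > 0\<close> show ?thesis by blast
qed

lemma abs_diff_le_of_real_derivative_bound: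
  fixes f f' :: "real \<Rightarrow> real"
  assumes t: "t \<ge> 0"
    and f': "\<And>s. 0 \<le> s \<Longrightarrow> s \<le> t \<Longrightarrow> (f has_real_derivative f' s) (at s within {0..})"
    and B: "\<And>s. 0 \<le> s \<Longrightarrow> s \<le> t \<Longrightarrow> \<bar>f' s\<bar> \<le> B"
  shows "\<bar>f t - f 0\<bar> \<le> B * t"
proof -
  have cont: "continuous_on {0..t} f"
  proof -
    have "\<And>s. s \<in> {0..t} \<Longrightarrow> continuous (at s within {0..t}) f"
      using f' by (meson DERIV_continuous DERIV_subset atLeastAtMost_iff atLeast_iff subsetI)
    then show ?thesis using continuous_on_eq_continuous_within by blast
  qed
  have dd: "\<And>s. 0 < s \<Longrightarrow> s < t \<Longrightarrow> (f has_real_derivative f' s) (at s)"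
  proof -
    fix s :: real assume s: "0 < s" "s < t"
    have "(f has_real_derivative f' s) (at s within {0<..})"
      using f'[of s] s by (meson DERIV_subset greaterThan_iff atLeast_iff less_imp_le subsetI)
    then show "(f has_real_derivative f' s) (at s)"
      using s at_within_open[of s "{0<..}"] by simp
  qed
  have "(\<lambda>s. B * s - f s) 0 \<le> (\<lambda>s. B * s - f s) t"
  proof (rule DERIV_nonneg_imp_increasing_open[OF t])
    fix x :: real assume "0 < x" "x < t"
    then show "\<exists>y. ((\<lambda>s. B * s - f s) has_real_derivative y) (at x) \<and> 0 \<le> y"
      using dd B[of x] by (intro exI[of _ "B - f' x"]) (auto intro!: derivative_eq_intros simp: abs_le_iff)
  next
    show "continuous_on {0..t} (\<lambda>s. B * s - f s)" using cont by (intro continuous_intros)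
  qed
  moreover have "(\<lambda>s. B * s + f s) 0 \<le> (\<lambda>s. B * s + f s) t"
  proof (rule DERIV_nonneg_imp_increasing_open[OF t])
    fix x :: real assume "0 < x" "x < t"
    then show "\<exists>y. ((\<lambda>s. B * s + f s) has_real_derivative y) (at x) \<and> 0 \<le> y"
      using dd B[of x] by (intro exI[of _ "B + f' x"]) (auto intro!: derivative_eq_intros simp: abs_le_iff)
  next
    show "continuous_on {0..t} (\<lambda>s. B * s + f s)" using cont by (intro continuous_intros)
  qed
  ultimately show ?thesis by (simp add: abs_le_iff)
qed

lemma norm_diff_le_of_vector_derivative_bound:
  fixes f :: "real \<Rightarrow> complex"
  assumes t: "t \<ge> 0"
    and f': "\<And>s. 0 \<le> s \<Longrightarrow> s \<le> t \<Longrightarrow> (f has_vector_derivative f' s) (at s within {0..})"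
    and B: "\<And>s. 0 \<le> s \<Longrightarrow> s \<le> t \<Longrightarrow> norm (f' s) \<le> B"
  shows "norm (f t - f 0) \<le> B * t"
proof -
  \<comment> \<open>Project onto \<open>w\<close> and apply the real mean value bound.\<close>
  define w where "w = f t - f 0"
  have "\<bar>Re (cnj w * f t) - Re (cnj w * f 0)\<bar> \<le> (norm w * B) * t"
  proof (rule abs_diff_le_of_real_derivative_bound[OF t])
    fix s assume s: "0 \<le> s" "s \<le> t"
    have "bounded_linear (\<lambda>z. Re (cnj w * z))"
      by (intro bounded_linear_compose[OF bounded_linear_Re] bounded_linear_mult_right)
    from bounded_linear.has_vector_derivative[OF this f'[OF s]]
    show "((\<lambda>s. Re (cnj w * f s)) has_real_derivative Re (cnj w * f' s)) (at s within {0..})"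
      by (simp add: has_real_derivative_iff_has_vector_derivative)
    have "\<bar>Re (cnj w * f' s)\<bar> \<le> norm w * norm (f' s)"
      using abs_Re_le_cmod[of "cnj w * f' s"] by (simp add: norm_mult)
    also have "\<dots> \<le> norm w * B" using B[OF s] by (simp add: mult_left_mono)
    finally show "\<bar>Re (cnj w * f' s)\<bar> \<le> norm w * B" .
  qed
  moreover have "Re (cnj w * f t) - Re (cnj w * f 0) = Re (cnj w * w)"
    unfolding w_def by (simp only: right_diff_distrib minus_complex.sel)
  moreover have "Re (cnj w * w) = norm w * norm w"
    using arg_cong[OF complex_norm_square[of w], of Re]
    by (simp only: mult.commute[of w] Re_complex_of_real power2_eq_square)
  ultimately have "norm w * norm w \<le> norm w * (B * t)" by (simp only: mult.assoc abs_mult_self_eq)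
  moreover have "0 \<le> B" using B[of 0] t norm_ge_zero[of "f' 0"] by linarith
  ultimately have "norm w \<le> B * t"
    using t by (cases "w = 0") (simp_all add: mult_le_cancel_left_pos)
  then show ?thesis by (simp add: w_def)
qed

lemma linear_ode_norm_le:
  fixes g h :: "real \<Rightarrow> complex"
  assumes g': "\<And>s. s \<ge> 0 \<Longrightarrow> (g has_vector_derivative l * g s + h s) (at s within {0..})"
    and h: "\<And>s. s \<ge> 0 \<Longrightarrow> norm (h s) \<le> M * exp (- b * s)"
    and d: "d \<le> - Re l" "d \<le> b" and t: "t \<ge> 0"
  shows "norm (g t) \<le> norm (g 0) * exp (- d * t) + M * (t * exp (- d * t))"
proof -
  define \<mu> where "\<mu> = - Re l"
  define E where "E s = exp (- (l * of_real s))" for s :: real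
  define \<phi> where "\<phi> = (\<lambda>s. E s * g s)"
  have "M \<ge> 0" using h[of 0] by simp (meson norm_ge_zero order_trans)
  have norm_E: "norm (E s) = exp (\<mu> * s)" for s by (simp add: E_def \<mu>_def)
  have \<phi>': "(\<phi> has_vector_derivative E s * h s) (at s within {0..})" if "s \<ge> 0" for s
  proof -
    have "(E has_vector_derivative E s * (- l)) (at s within {0..})"
      unfolding E_def by (rule has_vector_derivative_real_field) (auto intro!: derivative_eq_intros)
    from has_vector_derivative_mult[OF this g'[OF that]] show ?thesis
      by (simp add: \<phi>_def algebra_simps)
  qed
  have "norm (E s * h s) \<le> M * exp ((\<mu> - d) * t)" if "0 \<le> s" "s \<le> t" for s
  proof -
    have "norm (E s * h s) \<le> exp (\<mu> * s) * (M * exp (- b * s))"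
      using h[of s] that by (simp add: norm_mult norm_E mult_left_mono)
    also have "\<dots> = M * exp ((\<mu> - b) * s)" by (simp add: exp_add[symmetric] algebra_simps)
    also have "\<dots> \<le> M * exp ((\<mu> - d) * t)"
    proof -
      have "(\<mu> - b) * s \<le> (\<mu> - d) * s" using d that by (simp add: mult_right_mono)
      also have "\<dots> \<le> (\<mu> - d) * t" using d that by (simp add: \<mu>_def mult_left_mono)
      finally show ?thesis using \<open>M \<ge> 0\<close> by (simp add: mult_left_mono)
    qed
    finally show ?thesis .
  qed
  with \<phi>' have "norm (\<phi> t - \<phi> 0) \<le> M * exp ((\<mu> - d) * t) * t"
    by (intro norm_diff_le_of_vector_derivative_bound[OF t]) auto
  moreover have "\<phi> 0 = g 0" by (simp add: \<phi>_def E_def)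
  ultimately have "norm (\<phi> t) \<le> norm (g 0) + M * exp ((\<mu> - d) * t) * t"
    by (metis norm_triangle_sub add.commute order_trans add_le_cancel_left)
  moreover have "norm (g t) = exp (- \<mu> * t) * norm (\<phi> t)"
    by (simp add: \<phi>_def norm_mult norm_E exp_minus field_simps)
  ultimately have "norm (g t) \<le> exp (- \<mu> * t) * (norm (g 0) + M * exp ((\<mu> - d) * t) * t)"
    by (simp add: mult_left_mono)
  also have "\<dots> = norm (g 0) * exp (- \<mu> * t) + M * (t * exp (- d * t))"
    by (simp add: algebra_simps exp_add[symmetric])
  also have "\<dots> \<le> norm (g 0) * exp (- d * t) + M * (t * exp (- d * t))"
  proof -
    have "d * t \<le> \<mu> * t" using d t by (intro mult_right_mono) (simp_all add: \<mu>_def)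
    then show ?thesis by (simp add: mult_left_mono)
  qed
  finally show ?thesis .
qed

lemma exp_decay_linear_ode:
  fixes g h :: "real \<Rightarrow> complex"
  assumes l: "Re l < 0" and h: "exp_decay h"
    and g': "\<And>t. t \<ge> 0 \<Longrightarrow> (g has_vector_derivative l * g t + h t) (at t within {0..})"
  shows "exp_decay g"
proof -
  obtain M b where "b > 0" and hb: "\<And>t. t \<ge> 0 \<Longrightarrow> norm (h t) \<le> M * exp (- b * t)"
    using h unfolding exp_decay_def by blast
  define d where "d = min (- Re l) b"
  have d: "d > 0" "d \<le> - Re l" "d \<le> b" using l \<open>b > 0\<close> by (auto simp: d_def)
  have "exp_decay (\<lambda>t. norm (g 0) * exp (- d * t) + M * (t * exp (- d * t)))"
    using d by (intro exp_decay_add exp_decay_cmult exp_decay_exp exp_decay_time_mult_exp)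
  moreover have "norm (g t) \<le> norm (norm (g 0) * exp (- d * t) + M * (t * exp (- d * t)))"
    if "t \<ge> 0" for t
    using linear_ode_norm_le[OF g' hb d(2,3) that] by simp
  ultimately show ?thesis by (rule exp_decay_le)
qed

section \<open>Linear differential equations with a Hurwitz matrix\<close>

lemma exp_decay_upper_triangular_ode:
  fixes B :: "complex mat" and f :: "nat \<Rightarrow> real \<Rightarrow> complex"
  assumes B: "B \<in> carrier_mat n n" "upper_triangular B"
    and diag: "\<And>k. k < n \<Longrightarrow> Re (B $$ (k, k)) < 0"
    and f': "\<And>k t. k < n \<Longrightarrow> t \<ge> 0 \<Longrightarrow>
      (f k has_vector_derivative (\<Sum>l<n. B $$ (k, l) * f l t)) (at t within {0..})"
    and "k < n"
  shows "exp_decay (f k)"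
  using \<open>k < n\<close>
proof (induction "n - k" arbitrary: k rule: less_induct)
  case less
  define h where "h = (\<lambda>t. \<Sum>l\<in>{k<..<n}. B $$ (k, l) * f l t)"
  have "exp_decay h"
    unfolding h_def by (intro exp_decay_sum exp_decay_cmult less.hyps) auto
  have split: "(\<Sum>l<n. B $$ (k, l) * f l t) = B $$ (k, k) * f k t + h t" for t
  proof -
    have "{..<n} = insert k ({..<k} \<union> {k<..<n})" using less.prems by auto
    then have "(\<Sum>l<n. B $$ (k, l) * f l t)
        = B $$ (k, k) * f k t + (\<Sum>l\<in>{..<k} \<union> {k<..<n}. B $$ (k, l) * f l t)"
      by simp
    moreover have "(\<Sum>l\<in>{..<k} \<union> {k<..<n}. B $$ (k, l) * f l t) = (\<Sum>l<k. B $$ (k, l) * f l t) + h t"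
      unfolding h_def by (rule sum.union_disjoint) auto
    moreover have "(\<Sum>l<k. B $$ (k, l) * f l t) = 0"
      using B less.prems by (intro sum.neutral) (auto simp: upper_triangular_def)
    ultimately show ?thesis by simp
  qed
  show ?case
  proof (rule exp_decay_linear_ode[OF diag[OF less.prems] \<open>exp_decay h\<close>])
    fix t :: real assume "t \<ge> 0"
    from f'[OF less.prems this]
    show "(f k has_vector_derivative B $$ (k, k) * f k t + h t) (at t within {0..})"
      unfolding split .
  qed
qed

lemma hurwitz_schur_decomposition:
  assumes A: "A \<in> carrier_mat n n" and "hurwitz A"
  obtains B P Q where "similar_mat_wit (map_mat complex_of_real A) B P Q" "upper_triangular B"
    "\<And>k. k < n \<Longrightarrow> Re (B $$ (k, k)) < 0"
proof -
  let ?Ac = "map_mat complex_of_real A"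
  have Ac: "?Ac \<in> carrier_mat n n" using A by simp
  obtain es where cp: "char_poly ?Ac = (\<Prod>a\<leftarrow>es. [:- a, 1:])"
    using char_poly_factorized[OF Ac] by auto
  obtain B P Q where "schur_decomposition ?Ac es = (B, P, Q)"
    by (cases "schur_decomposition ?Ac es") auto
  from schur_decomposition[OF Ac cp this]
  have sim: "similar_mat_wit ?Ac B P Q" and "upper_triangular B" and diag: "diag_mat B = es"
    by auto
  have "Re (B $$ (k, k)) < 0" if "k < n" for k
  proof -
    have "B \<in> carrier_mat n n" using sim Ac by (auto simp: similar_mat_wit_def)
    then have "B $$ (k, k) \<in> set es" using diag that by (auto simp: diag_mat_def)
    then have "poly (char_poly ?Ac) (B $$ (k, k)) = 0"
      unfolding cp by (auto simp: poly_prod_list_zero_iff)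
    then show ?thesis
      using \<open>hurwitz A\<close> eigenvalue_root_char_poly[OF Ac] by (simp add: hurwitz_def)
  qed
  with sim \<open>upper_triangular B\<close> show ?thesis by (rule that)
qed

definition has_vec_derivative :: "nat \<Rightarrow> (real \<Rightarrow> real vec) \<Rightarrow> real vec \<Rightarrow> real filter \<Rightarrow> bool" where
  "has_vec_derivative n v v' F \<longleftrightarrow> (\<forall>i<n. ((\<lambda>s. v s $ i) has_real_derivative v' $ i) F)"

lemma has_vec_derivative_transform_within:
  assumes "has_vec_derivative n v v' (at t within S)" and "t \<in> S"
    and "\<And>s i. s \<in> S \<Longrightarrow> i < n \<Longrightarrow> w s $ i = v s $ i"
  shows "has_vec_derivative n w v' (at t within S)"
  unfolding has_vec_derivative_def
proof (intro allI impI)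
  fix i assume "i < n"
  with assms(1) have "((\<lambda>s. v s $ i) has_real_derivative v' $ i) (at t within S)"
    unfolding has_vec_derivative_def by blast
  then show "((\<lambda>s. w s $ i) has_real_derivative v' $ i) (at t within S)"
    by (rule has_field_derivative_transform_within[where d = 1])
      (simp_all add: assms(2,3) \<open>i < n\<close>)
qed

lemma has_vec_derivative_mult_mat_vec:
  assumes M: "M \<in> carrier_mat m n" and v: "\<And>s. s \<in> S \<Longrightarrow> v s \<in> carrier_vec n" and "t \<in> S"
    and v': "v' \<in> carrier_vec n" and v_deriv: "has_vec_derivative n v v' (at t within S)"
  shows "has_vec_derivative m (\<lambda>s. M *\<^sub>v v s) (M *\<^sub>v v') (at t within S)"
  unfolding has_vec_derivative_def
proof (intro allI impI)
  fix i assume i: "i < m"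
  have "((\<lambda>s. \<Sum>j<n. M $$ (i, j) * v s $ j) has_real_derivative (\<Sum>j<n. M $$ (i, j) * v' $ j))
      (at t within S)"
    using v_deriv unfolding has_vec_derivative_def by (intro DERIV_sum DERIV_cmult) auto
  also have "(\<Sum>j<n. M $$ (i, j) * v' $ j) = (M *\<^sub>v v') $ i"
    using M v' i by (simp add: scalar_prod_def atLeast0LessThan)
  finally show "((\<lambda>s. (M *\<^sub>v v s) $ i) has_real_derivative (M *\<^sub>v v') $ i) (at t within S)"
    by (rule has_field_derivative_transform_within[where d = 1])
      (use M i \<open>t \<in> S\<close> in \<open>simp_all add: carrier_vecD[OF v] scalar_prod_def atLeast0LessThan\<close>)
qed

lemma has_vec_derivative_add:
  assumes v: "has_vec_derivative n v v' (at t within S)" and w: "has_vec_derivative n w w' (at t within S)"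
    and "t \<in> S" and "\<And>s. s \<in> S \<Longrightarrow> w s \<in> carrier_vec n" and "w' \<in> carrier_vec n"
  shows "has_vec_derivative n (\<lambda>s. v s + w s) (v' + w') (at t within S)"
  unfolding has_vec_derivative_def
proof (intro allI impI)
  fix i assume i: "i < n"
  have "((\<lambda>s. v s $ i + w s $ i) has_real_derivative v' $ i + w' $ i) (at t within S)"
    using v w i unfolding has_vec_derivative_def by (intro DERIV_add) auto
  also have "v' $ i + w' $ i = (v' + w') $ i" using assms(5) i by simp
  finally show "((\<lambda>s. (v s + w s) $ i) has_real_derivative (v' + w') $ i) (at t within S)"
    by (rule has_field_derivative_transform_within[where d = 1])
      (use assms(3) i in \<open>simp_all add: carrier_vecD[OF assms(4)]\<close>)
qed

lemma has_vec_derivative_diff: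
  assumes v: "has_vec_derivative n v v' (at t within S)" and w: "has_vec_derivative n w w' (at t within S)"
    and "t \<in> S" and "\<And>s. s \<in> S \<Longrightarrow> w s \<in> carrier_vec n" and "w' \<in> carrier_vec n"
  shows "has_vec_derivative n (\<lambda>s. v s - w s) (v' - w') (at t within S)"
  unfolding has_vec_derivative_def
proof (intro allI impI)
  fix i assume i: "i < n"
  have "((\<lambda>s. v s $ i - w s $ i) has_real_derivative v' $ i - w' $ i) (at t within S)"
    using v w i unfolding has_vec_derivative_def by (intro DERIV_diff) auto
  also have "v' $ i - w' $ i = (v' - w') $ i" using assms(5) i by simp
  finally show "((\<lambda>s. (v s - w s) $ i) has_real_derivative (v' - w') $ i) (at t within S)"
    by (rule has_field_derivative_transform_within[where d = 1])
      (use assms(3) i in \<open>simp_all add: carrier_vecD[OF assms(4)]\<close>)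
qed

lemma hurwitz_linear_ode_exp_decay:
  fixes A :: "real mat" and e :: "real \<Rightarrow> real vec"
  assumes A: "A \<in> carrier_mat n n" and "hurwitz A"
    and e: "\<And>t. t \<ge> 0 \<Longrightarrow> e t \<in> carrier_vec n"
    and e': "\<And>t. t \<ge> 0 \<Longrightarrow> has_vec_derivative n e (A *\<^sub>v e t) (at t within {0..})"
    and "i < n"
  shows "exp_decay (\<lambda>t. e t $ i)"
proof (rule hurwitz_schur_decomposition[OF A \<open>hurwitz A\<close>])
  fix B P Q assume sim: "similar_mat_wit (map_mat complex_of_real A) B P Q"
    and B: "upper_triangular B" and diag: "\<And>k. k < n \<Longrightarrow> Re (B $$ (k, k)) < 0"
  define Ac where "Ac = map_mat complex_of_real A"
  define ec where "ec t = map_vec complex_of_real (e t)" for t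
  have Ac: "Ac \<in> carrier_mat n n" using A by (simp add: Ac_def)
  have ec: "ec t \<in> carrier_vec n" if "t \<ge> 0" for t using e[OF that] by (simp add: ec_def)
  from sim[folded Ac_def] Ac have carr: "B \<in> carrier_mat n n" "P \<in> carrier_mat n n" "Q \<in> carrier_mat n n"
    and "P * Q = 1\<^sub>m n" "Q * P = 1\<^sub>m n" and "Ac = P * B * Q"
    unfolding similar_mat_wit_def Let_def by auto
  have QA: "Q * Ac = B * Q"
  proof -
    have "Q * Ac = (Q * (P * B)) * Q"
      unfolding \<open>Ac = P * B * Q\<close> using carr by (intro assoc_mult_mat[symmetric]) auto
    also have "\<dots> = ((Q * P) * B) * Q" using carr by (simp add: assoc_mult_mat[of Q n n P n B n])
    also have "\<dots> = B * Q" using \<open>Q * P = 1\<^sub>m n\<close> carr by simp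
    finally show ?thesis .
  qed
  define f where "f = (\<lambda>k t. \<Sum>j<n. Q $$ (k, j) * complex_of_real (e t $ j))"
  have f: "f k t = (Q *\<^sub>v ec t) $ k" if "t \<ge> 0" "k < n" for k t
    using that carr e[OF that(1)] by (simp add: f_def ec_def scalar_prod_def atLeast0LessThan)
  have f': "(f k has_vector_derivative (\<Sum>l<n. B $$ (k, l) * f l t)) (at t within {0..})"
    if "k < n" "t \<ge> 0" for k t
  proof -
    have ev: "map_vec complex_of_real (A *\<^sub>v e t) = Ac *\<^sub>v ec t"
      unfolding Ac_def ec_def using A e[OF that(2)] by (rule of_real_hom.mult_mat_vec_hom)
    have "Q *\<^sub>v (Ac *\<^sub>v ec t) = (Q * Ac) *\<^sub>v ec t"
      using carr Ac ec[OF that(2)] by (intro assoc_mult_mat_vec[symmetric]) auto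
    also have "\<dots> = B *\<^sub>v (Q *\<^sub>v ec t)"
      unfolding QA using carr ec[OF that(2)] by (intro assoc_mult_mat_vec) auto
    finally have QB: "Q *\<^sub>v map_vec complex_of_real (A *\<^sub>v e t) = B *\<^sub>v (Q *\<^sub>v ec t)"
      unfolding ev .
    have "(f k has_vector_derivative (\<Sum>j<n. Q $$ (k, j) * complex_of_real ((A *\<^sub>v e t) $ j)))
        (at t within {0..})"
      using e'[OF that(2)] unfolding f_def has_vec_derivative_def
      by (intro has_vector_derivative_sum has_vector_derivative_mult_right
          has_vector_derivative_of_real) auto
    moreover have "(\<Sum>j<n. Q $$ (k, j) * complex_of_real ((A *\<^sub>v e t) $ j))
        = (Q *\<^sub>v map_vec complex_of_real (A *\<^sub>v e t)) $ k"
      using that carr A by (simp add: scalar_prod_def atLeast0LessThan)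
    moreover have "(B *\<^sub>v (Q *\<^sub>v ec t)) $ k = (\<Sum>l<n. B $$ (k, l) * f l t)"
      using that carr ec[OF that(2)] f[OF that(2)] by (simp add: scalar_prod_def atLeast0LessThan)
    ultimately show ?thesis by (simp only: QB)
  qed
  have "exp_decay (f k)" if "k < n" for k
    using exp_decay_upper_triangular_ode[OF carr(1) B diag f' that] .
  then have dec: "exp_decay (\<lambda>t. \<Sum>k<n. P $$ (i, k) * f k t)"
    by (intro exp_decay_sum exp_decay_cmult) auto
  have le: "norm (e t $ i) \<le> norm (\<Sum>k<n. P $$ (i, k) * f k t)" if "t \<ge> 0" for t
  proof -
    have "(P * Q) *\<^sub>v ec t = ec t" using \<open>P * Q = 1\<^sub>m n\<close> ec[OF that] by simp
    then have "P *\<^sub>v (Q *\<^sub>v ec t) = ec t"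
      using carr ec[OF that] by (simp add: assoc_mult_mat_vec[of P n n Q n])
    then have "complex_of_real (e t $ i) = (P *\<^sub>v (Q *\<^sub>v ec t)) $ i"
      using \<open>i < n\<close> e[OF that] by (simp add: ec_def)
    also have "\<dots> = (\<Sum>k<n. P $$ (i, k) * f k t)"
      using \<open>i < n\<close> carr ec[OF that] f[OF that] by (simp add: scalar_prod_def atLeast0LessThan)
    finally have "norm (complex_of_real (e t $ i)) = norm (\<Sum>k<n. P $$ (i, k) * f k t)" by simp
    then show ?thesis by simp
  qed
  show ?thesis by (rule exp_decay_le[OF dec le])
qed

section \<open>Observability and controllability matrices\<close>

lemma mat_commute_pow:
  assumes A: "A \<in> carrier_mat n n" and X: "X \<in> carrier_mat n n" and XA: "X * A = A * X"
  shows "X * A ^\<^sub>m k = A ^\<^sub>m k * X"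
proof (induction k)
  case 0
  show ?case using A X by simp
next
  case (Suc k)
  have Ak: "A ^\<^sub>m k \<in> carrier_mat n n" using A by simp
  have "X * A ^\<^sub>m Suc k = (X * A ^\<^sub>m k) * A"
    using A X Ak by (simp add: assoc_mult_mat[of X n n "A ^\<^sub>m k" n A n])
  also have "\<dots> = A ^\<^sub>m k * (X * A)"
    using A X Ak Suc.IH by (simp add: assoc_mult_mat[of "A ^\<^sub>m k" n n X n A n])
  also have "\<dots> = A ^\<^sub>m Suc k * X"
    using A X Ak XA by (simp add: assoc_mult_mat[of "A ^\<^sub>m k" n n A n X n])
  finally show ?case .
qed

lemma transpose_pow_mat:
  fixes A :: "'a::comm_semiring_1 mat"
  assumes A: "A \<in> carrier_mat n n"
  shows "transpose_mat (A ^\<^sub>m k) = transpose_mat A ^\<^sub>m k"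
proof (induction k)
  case 0
  show ?case using A by simp
next
  case (Suc k)
  have "transpose_mat (A ^\<^sub>m Suc k) = transpose_mat A * transpose_mat A ^\<^sub>m k"
    using A Suc.IH by (simp add: transpose_mult[of _ n n _ n])
  also have "\<dots> = transpose_mat A ^\<^sub>m Suc k"
    using A by (simp add: mat_commute_pow[of "transpose_mat A" n])
  finally show ?case .
qed

lemma obsv_mat_dim[simp]: "dim_row (obsv_mat n c A) = n" "dim_col (obsv_mat n c A) = n"
  by (simp_all add: obsv_mat_def)

lemma ctrb_mat_dim[simp]: "dim_row (ctrb_mat n A b) = n" "dim_col (ctrb_mat n A b) = n"
  by (simp_all add: ctrb_mat_def)

lemma obsv_mat_carrier[simp]: "obsv_mat n c A \<in> carrier_mat n n"
  by (simp add: obsv_mat_def)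

lemma ctrb_mat_carrier[simp]: "ctrb_mat n A b \<in> carrier_mat n n"
  by (simp add: ctrb_mat_def)

lemma row_obsv_mat:
  assumes "A \<in> carrier_mat n n" "c \<in> carrier_vec n" "i < n"
  shows "row (obsv_mat n c A) i = transpose_mat (A ^\<^sub>m i) *\<^sub>v c"
proof (rule eq_vecI)
  fix j assume "j < dim_vec (transpose_mat (A ^\<^sub>m i) *\<^sub>v c)"
  then have "j < n" using carrier_matD[OF assms(1)] by (simp split: if_splits)
  then show "row (obsv_mat n c A) i $ j = (transpose_mat (A ^\<^sub>m i) *\<^sub>v c) $ j"
    using assms by (simp add: obsv_mat_def comm_scalar_prod[of c n])
qed (use carrier_matD[OF assms(1)] in simp)

lemma col_ctrb_mat:
  assumes "A \<in> carrier_mat n n" "b \<in> carrier_vec n" "j < n"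
  shows "col (ctrb_mat n A b) j = A ^\<^sub>m j *\<^sub>v b"
  using assms by (intro eq_vecI) (simp_all add: ctrb_mat_def)

lemma transpose_ctrb_mat:
  assumes A: "A \<in> carrier_mat n n" and c: "c \<in> carrier_vec n"
  shows "transpose_mat (ctrb_mat n (transpose_mat A) c) = obsv_mat n c A"
proof (rule eq_matI)
  fix i j assume "i < dim_row (obsv_mat n c A)" "j < dim_col (obsv_mat n c A)"
  then have "i < n" "j < n" by (auto simp: obsv_mat_def)
  then show "transpose_mat (ctrb_mat n (transpose_mat A) c) $$ (i, j) = obsv_mat n c A $$ (i, j)"
    using row_obsv_mat[OF A c, of i, THEN arg_cong[where f = "\<lambda>v. v $ j"]] A c
    by (simp add: ctrb_mat_def transpose_pow_mat obsv_mat_def)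
qed (auto simp: ctrb_mat_def obsv_mat_def)

lemma obsv_mat_mult_vec:
  assumes A: "A \<in> carrier_mat n n" and c: "c \<in> carrier_vec n" and b: "b \<in> carrier_vec n"
  shows "obsv_mat n c A *\<^sub>v b = transpose_mat (ctrb_mat n A b) *\<^sub>v c"
proof (rule eq_vecI)
  fix i assume "i < dim_vec (transpose_mat (ctrb_mat n A b) *\<^sub>v c)"
  then have i: "i < n" by (simp add: ctrb_mat_def)
  have "(obsv_mat n c A *\<^sub>v b) $ i = (transpose_mat (A ^\<^sub>m i) *\<^sub>v c) \<bullet> b"
    using A c i by (simp add: row_obsv_mat)
  also have "\<dots> = c \<bullet> (A ^\<^sub>m i *\<^sub>v b)"
    using A c b by (intro transpose_vec_mult_scalar[of _ n n]) auto
  also have "\<dots> = (A ^\<^sub>m i *\<^sub>v b) \<bullet> c"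
    using A b c by (auto intro!: comm_scalar_prod[of _ n] mult_mat_vec_carrier[of _ n n])
  also have "\<dots> = (transpose_mat (ctrb_mat n A b) *\<^sub>v c) $ i"
    using A b c i by (simp add: col_ctrb_mat)
  finally show "(obsv_mat n c A *\<^sub>v b) $ i = (transpose_mat (ctrb_mat n A b) *\<^sub>v c) $ i" .
qed (simp add: obsv_mat_def ctrb_mat_def)

lemma obsv_mat_mult_commuting:
  assumes A: "A \<in> carrier_mat n n" and X: "X \<in> carrier_mat n n" and XA: "X * A = A * X"
    and c: "c \<in> carrier_vec n"
  shows "obsv_mat n c A * X = obsv_mat n (transpose_mat X *\<^sub>v c) A"
proof (rule eq_matI)
  fix i j assume "i < dim_row (obsv_mat n (transpose_mat X *\<^sub>v c) A)"
    "j < dim_col (obsv_mat n (transpose_mat X *\<^sub>v c) A)"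
  then have i: "i < n" and j: "j < n" by (auto simp: obsv_mat_def)
  have Ai: "A ^\<^sub>m i \<in> carrier_mat n n" using A by simp
  have "A ^\<^sub>m i *\<^sub>v col X j = col (A ^\<^sub>m i * X) j"
    using Ai X j by (simp only: col_mult2)
  also have "\<dots> = col (X * A ^\<^sub>m i) j" by (simp only: mat_commute_pow[OF A X XA])
  also have "\<dots> = X *\<^sub>v col (A ^\<^sub>m i) j"
    using Ai X j by (simp only: col_mult2)
  finally have col: "A ^\<^sub>m i *\<^sub>v col X j = X *\<^sub>v col (A ^\<^sub>m i) j" .
  have "(obsv_mat n c A * X) $$ (i, j) = (transpose_mat (A ^\<^sub>m i) *\<^sub>v c) \<bullet> col X j"
    using A c i j X by (simp add: row_obsv_mat)
  also have "\<dots> = c \<bullet> (A ^\<^sub>m i *\<^sub>v col X j)"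
    using Ai X c j by (intro transpose_vec_mult_scalar) auto
  also have "\<dots> = c \<bullet> (X *\<^sub>v col (A ^\<^sub>m i) j)" unfolding col ..
  also have "\<dots> = (transpose_mat X *\<^sub>v c) \<bullet> col (A ^\<^sub>m i) j"
    using Ai X c j by (simp add: transpose_vec_mult_scalar[of _ n n])
  also have "\<dots> = obsv_mat n (transpose_mat X *\<^sub>v c) A $$ (i, j)"
    using i j by (simp add: obsv_mat_def)
  finally show "(obsv_mat n c A * X) $$ (i, j) = obsv_mat n (transpose_mat X *\<^sub>v c) A $$ (i, j)" .
qed (use X in auto)

definition mat_poly :: "nat \<Rightarrow> (nat \<Rightarrow> 'a::semiring_1) \<Rightarrow> 'a mat \<Rightarrow> 'a mat" where
  "mat_poly n h A = mat n n (\<lambda>(i, j). \<Sum>k<n. h k * (A ^\<^sub>m k) $$ (i, j))"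

lemma mat_poly_dim[simp]: "dim_row (mat_poly n h A) = n" "dim_col (mat_poly n h A) = n"
  by (simp_all add: mat_poly_def)

lemma mat_poly_carrier: "mat_poly n h A \<in> carrier_mat n n"
  by (simp add: mat_poly_def)

lemma index_mat_poly_mult:
  assumes A: "A \<in> carrier_mat n n" and M: "M \<in> carrier_mat n n" and "i < n" "j < n"
  shows "(mat_poly n h A * M) $$ (i, j) = (\<Sum>k<n. h k * (A ^\<^sub>m k * M) $$ (i, j))"
proof -
  have "(mat_poly n h A * M) $$ (i, j) = (\<Sum>l<n. \<Sum>k<n. h k * ((A ^\<^sub>m k) $$ (i, l) * M $$ (l, j)))"
    using assms by (simp add: mat_poly_def scalar_prod_def atLeast0LessThan sum_distrib_right mult.assoc)
  also have "\<dots> = (\<Sum>k<n. h k * (\<Sum>l<n. (A ^\<^sub>m k) $$ (i, l) * M $$ (l, j)))"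
    by (simp only: sum_distrib_left) (rule sum.swap)
  also have "\<dots> = (\<Sum>k<n. h k * (A ^\<^sub>m k * M) $$ (i, j))"
    using assms by (simp add: scalar_prod_def atLeast0LessThan)
  finally show ?thesis .
qed

lemma index_mult_mat_poly:
  fixes A :: "'a::comm_semiring_1 mat"
  assumes A: "A \<in> carrier_mat n n" and M: "M \<in> carrier_mat n n" and "i < n" "j < n"
  shows "(M * mat_poly n h A) $$ (i, j) = (\<Sum>k<n. h k * (M * A ^\<^sub>m k) $$ (i, j))"
proof -
  have "(M * mat_poly n h A) $$ (i, j) = (\<Sum>l<n. \<Sum>k<n. h k * (M $$ (i, l) * (A ^\<^sub>m k) $$ (l, j)))"
    using assms by (simp add: mat_poly_def scalar_prod_def atLeast0LessThan sum_distrib_left ac_simps)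
  also have "\<dots> = (\<Sum>k<n. h k * (\<Sum>l<n. M $$ (i, l) * (A ^\<^sub>m k) $$ (l, j)))"
    by (simp only: sum_distrib_left) (rule sum.swap)
  also have "\<dots> = (\<Sum>k<n. h k * (M * A ^\<^sub>m k) $$ (i, j))"
    using assms by (simp add: scalar_prod_def atLeast0LessThan)
  finally show ?thesis .
qed

lemma mat_poly_commute:
  fixes A :: "'a::comm_semiring_1 mat"
  assumes A: "A \<in> carrier_mat n n"
  shows "mat_poly n h A * A = A * mat_poly n h A"
proof (rule eq_matI)
  fix i j assume "i < dim_row (A * mat_poly n h A)" "j < dim_col (A * mat_poly n h A)"
  with A have "i < n" "j < n" by auto
  then show "(mat_poly n h A * A) $$ (i, j) = (A * mat_poly n h A) $$ (i, j)"
    by (simp only: index_mat_poly_mult[OF A A] index_mult_mat_poly[OF A A]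
        mat_commute_pow[OF A A refl])
qed (use A in \<open>simp_all add: mat_poly_def\<close>)

lemma transpose_mat_poly_mult_vec:
  assumes A: "A \<in> carrier_mat n n" and c: "c \<in> carrier_vec n" and h: "h \<in> carrier_vec n"
  shows "transpose_mat (mat_poly n (\<lambda>k. h $ k) A) *\<^sub>v c = transpose_mat (obsv_mat n c A) *\<^sub>v h"
proof (rule eq_vecI)
  fix j assume "j < dim_vec (transpose_mat (obsv_mat n c A) *\<^sub>v h)"
  then have j: "j < n" by simp
  have "(transpose_mat (mat_poly n (\<lambda>k. h $ k) A) *\<^sub>v c) $ j
      = (\<Sum>l<n. \<Sum>k<n. h $ k * (c $ l * (A ^\<^sub>m k) $$ (l, j)))"
    using A c j by (simp add: mat_poly_def scalar_prod_def atLeast0LessThan sum_distrib_left ac_simps)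
  also have "\<dots> = (\<Sum>k<n. h $ k * (\<Sum>l<n. c $ l * (A ^\<^sub>m k) $$ (l, j)))"
    by (simp only: sum_distrib_left) (rule sum.swap)
  also have "\<dots> = (transpose_mat (obsv_mat n c A) *\<^sub>v h) $ j"
    using A c h j by (simp add: obsv_mat_def scalar_prod_def atLeast0LessThan ac_simps)
  finally show "(transpose_mat (mat_poly n (\<lambda>k. h $ k) A) *\<^sub>v c) $ j
      = (transpose_mat (obsv_mat n c A) *\<^sub>v h) $ j" .
qed (simp add: mat_poly_def)

lemma obsv_mat_factor_commuting:
  fixes A :: "real mat"
  assumes A: "A \<in> carrier_mat n n" and c: "c \<in> carrier_vec n" and th: "th \<in> carrier_vec n"
    and Ci: "Ci \<in> carrier_mat n n" "Ci * obsv_mat n c A = 1\<^sub>m n"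
  obtains X where "X \<in> carrier_mat n n" "X * A = A * X" "obsv_mat n th A = obsv_mat n c A * X"
proof -
  \<comment> \<open>With \<open>th = C\<^sup>T h\<close> for \<open>C = obsv_mat n c A\<close>, \<open>X\<close> is the polynomial \<open>\<Sum>\<^sub>k h\<^sub>k A\<^sup>k\<close>.\<close>
  define X where "X = mat_poly n (\<lambda>k. (transpose_mat Ci *\<^sub>v th) $ k) A"
  have X: "X \<in> carrier_mat n n" unfolding X_def by (rule mat_poly_carrier)
  have XA: "X * A = A * X" unfolding X_def by (rule mat_poly_commute[OF A])
  have "transpose_mat X *\<^sub>v c = transpose_mat (obsv_mat n c A) *\<^sub>v (transpose_mat Ci *\<^sub>v th)"
    unfolding X_def using A c Ci th by (intro transpose_mat_poly_mult_vec) auto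
  also have "\<dots> = (transpose_mat (obsv_mat n c A) * transpose_mat Ci) *\<^sub>v th"
    using Ci th by (intro assoc_mult_mat_vec[symmetric]) auto
  also have "\<dots> = transpose_mat (Ci * obsv_mat n c A) *\<^sub>v th"
    using Ci(1) by (simp add: transpose_mult[of _ n n _ n])
  also have "\<dots> = th" using Ci th by simp
  finally have "obsv_mat n th A = obsv_mat n c A * X"
    using obsv_mat_mult_commuting[OF A X XA c] by simp
  with X XA show ?thesis by (rule that)
qed

lemma obsv_mat_left_inverse_mult_commute:
  fixes A :: "real mat"
  assumes A: "A \<in> carrier_mat n n" and c: "c \<in> carrier_vec n" and th: "th \<in> carrier_vec n"
    and Ci: "Ci \<in> carrier_mat n n" "Ci * obsv_mat n c A = 1\<^sub>m n"
  shows "(Ci * obsv_mat n th A) * A = A * (Ci * obsv_mat n th A)"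
proof -
  obtain X where X: "X \<in> carrier_mat n n" "X * A = A * X" and eq: "obsv_mat n th A = obsv_mat n c A * X"
    using obsv_mat_factor_commuting[OF assms] .
  have "Ci * obsv_mat n th A = X"
    unfolding eq using Ci X by (simp add: assoc_mult_mat[of Ci n n _ n X n, symmetric])
  with X show ?thesis by simp
qed

section \<open>The observer error\<close>

lemma observer_estimate_has_vec_derivative:
  fixes A :: "real mat"
  assumes A: "A \<in> carrier_mat n n" and c: "c \<in> carrier_vec n" and b: "b \<in> carrier_vec n"
    and Ci: "Ci \<in> carrier_mat n n" "Ci * obsv_mat n c A = 1\<^sub>m n"
    and th: "\<And>s. s \<ge> 0 \<Longrightarrow> th s \<in> carrier_vec n" and t: "t \<ge> 0"
    and th': "has_vec_derivative n th (transpose_mat A *\<^sub>v th t + w \<cdot>\<^sub>v c) (at t within {0..})"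
  shows "has_vec_derivative n (\<lambda>s. (Ci * obsv_mat n (th s) A) *\<^sub>v b)
      (A *\<^sub>v ((Ci * obsv_mat n (th t) A) *\<^sub>v b) + w \<cdot>\<^sub>v b) (at t within {0..})"
proof -
  define L where "L = Ci * transpose_mat (ctrb_mat n A b)"
  have L: "L \<in> carrier_mat n n" using Ci by (simp add: L_def)
  have est: "(Ci * obsv_mat n v A) *\<^sub>v b = L *\<^sub>v v" if "v \<in> carrier_vec n" for v
  proof -
    have "(Ci * obsv_mat n v A) *\<^sub>v b = Ci *\<^sub>v (obsv_mat n v A *\<^sub>v b)"
      using Ci b by (intro assoc_mult_mat_vec) auto
    also have "\<dots> = Ci *\<^sub>v (transpose_mat (ctrb_mat n A b) *\<^sub>v v)"
      using A b that by (simp add: obsv_mat_mult_vec)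
    also have "\<dots> = L *\<^sub>v v"
      unfolding L_def using Ci that by (intro assoc_mult_mat_vec[symmetric]) auto
    finally show ?thesis .
  qed
  have tht: "th t \<in> carrier_vec n" using th t by simp
  have "L *\<^sub>v (transpose_mat A *\<^sub>v th t) = (Ci * obsv_mat n (transpose_mat A *\<^sub>v th t) A) *\<^sub>v b"
    using A tht by (simp add: est)
  also have "\<dots> = ((Ci * obsv_mat n (th t) A) * A) *\<^sub>v b"
    using obsv_mat_mult_commuting[OF A A refl tht] Ci A by (simp add: assoc_mult_mat[of Ci n n _ n A n])
  also have "\<dots> = A *\<^sub>v ((Ci * obsv_mat n (th t) A) *\<^sub>v b)"
    using obsv_mat_left_inverse_mult_commute[OF A c tht Ci] A Ci b
    by (simp add: assoc_mult_mat_vec[of A n n _ n b])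
  finally have LA: "L *\<^sub>v (transpose_mat A *\<^sub>v th t) = A *\<^sub>v ((Ci * obsv_mat n (th t) A) *\<^sub>v b)" .
  have Lc: "L *\<^sub>v (w \<cdot>\<^sub>v c) = w \<cdot>\<^sub>v b"
    using L c Ci b by (simp add: mult_mat_vec[of _ n n] est[OF c, symmetric] flip: assoc_mult_mat_vec)
  have "has_vec_derivative n (\<lambda>s. L *\<^sub>v th s) (L *\<^sub>v (transpose_mat A *\<^sub>v th t + w \<cdot>\<^sub>v c))
      (at t within {0..})"
    using A c tht t th' by (intro has_vec_derivative_mult_mat_vec[OF L th]) auto
  also have "L *\<^sub>v (transpose_mat A *\<^sub>v th t + w \<cdot>\<^sub>v c)
      = A *\<^sub>v ((Ci * obsv_mat n (th t) A) *\<^sub>v b) + w \<cdot>\<^sub>v b"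
    using L A c tht by (simp add: mult_add_distrib_mat_vec[of _ n n] LA Lc)
  finally show ?thesis
    by (rule has_vec_derivative_transform_within) (simp_all add: est th t)
qed

lemma obs_canon_carrier: "obs_canon n ahat \<in> carrier_mat n n"
  by (simp add: obs_canon_def)

lemma c0_vec_carrier: "c0_vec n \<in> carrier_vec n"
  by (simp add: c0_vec_def)

lemma obsv_mat_c0_vec_index:
  assumes A: "A \<in> carrier_mat n n" and "i < n" "j < n"
  shows "obsv_mat n (c0_vec n) A $$ (i, j) = (A ^\<^sub>m i) $$ (0, j)"
proof -
  have "c0_vec n \<bullet> col (A ^\<^sub>m i) j = (\<Sum>k\<in>{0..<n}. (if k = 0 then 1 else 0) * (A ^\<^sub>m i) $$ (k, j))"
    using assms by (auto simp: scalar_prod_def c0_vec_def intro!: sum.cong)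
  also have "\<dots> = (A ^\<^sub>m i) $$ (0, j)" using assms by (simp add: sum.remove[of _ 0])
  finally show ?thesis using assms by (simp add: obsv_mat_def)
qed

lemma obs_canon_pow_first_row:
  assumes "i \<le> j" "j < n"
  shows "(obs_canon n ahat ^\<^sub>m i) $$ (0, j) = (if j = i then 1 else 0)"
  using assms
proof (induction i arbitrary: j)
  case 0
  then show ?case by (simp add: obs_canon_def)
next
  case (Suc i)
  let ?A = "obs_canon n ahat"
  have "(?A ^\<^sub>m Suc i) $$ (0, j) = (\<Sum>l\<in>{0..<n}. (?A ^\<^sub>m i) $$ (0, l) * ?A $$ (l, j))"
    using Suc.prems obs_canon_carrier[of n ahat] by (simp add: scalar_prod_def)
  also have "\<dots> = (\<Sum>l\<in>{0..<n}. if l = j - 1 then (?A ^\<^sub>m i) $$ (0, l) else 0)"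
    using Suc.prems by (intro sum.cong) (auto simp: obs_canon_def)
  also have "\<dots> = (?A ^\<^sub>m i) $$ (0, j - 1)" using Suc.prems by simp
  also have "\<dots> = (if j - 1 = i then 1 else 0)" using Suc by simp
  finally show ?case using Suc.prems by auto
qed

lemma mat_inv_obsv_mat_obs_canon:
  fixes n :: nat and ahat :: "nat \<Rightarrow> real"
  defines "C \<equiv> obsv_mat n (c0_vec n) (obs_canon n ahat)"
  shows "mat_inv C \<in> carrier_mat n n" and "mat_inv C * C = 1\<^sub>m n"
proof -
  have C: "C \<in> carrier_mat n n" by (simp add: C_def)
  have diag: "C $$ (i, j) = (if j = i then 1 else 0)" if "i \<le> j" "j < n" for i j
    using that obs_canon_carrier
    by (simp add: C_def obsv_mat_c0_vec_index obs_canon_pow_first_row)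
  have "det C = prod_list (diag_mat C)"
    using diag C by (intro det_lower_triangular) auto
  also have "\<dots> = 1"
    unfolding prod_list_diag_prod using C diag by (intro prod.neutral) auto
  finally have "C \<in> Units (ring_mat TYPE(real) n undefined)"
    using det_non_zero_imp_unit[OF C] by simp
  then have "mat_inverse C \<noteq> None" using mat_inverse(1)[OF C, of undefined] by blast
  then obtain B where "mat_inverse C = Some B" by blast
  with mat_inverse(2)[OF C] show "mat_inv C \<in> carrier_mat n n" "mat_inv C * C = 1\<^sub>m n"
    by (simp_all add: mat_inv_def)
qed

lemma observer_error_has_vec_derivative:
  fixes A :: "real mat"
  assumes A: "A \<in> carrier_mat n n" and c: "c \<in> carrier_vec n"
    and Ci: "Ci \<in> carrier_mat n n" "Ci * obsv_mat n c A = 1\<^sub>m n"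
    and b_y: "b_y \<in> carrier_vec n" and b_u: "b_u \<in> carrier_vec n"
    and x_dim: "\<And>s. s \<ge> 0 \<Longrightarrow> x s \<in> carrier_vec n"
    and th_y_dim: "\<And>s. s \<ge> 0 \<Longrightarrow> th_y s \<in> carrier_vec n"
    and th_u_dim: "\<And>s. s \<ge> 0 \<Longrightarrow> th_u s \<in> carrier_vec n"
    and t: "t \<ge> 0"
    and x': "has_vec_derivative n x (A *\<^sub>v x t + y \<cdot>\<^sub>v b_y + u \<cdot>\<^sub>v b_u) (at t within {0..})"
    and th_y': "has_vec_derivative n th_y (transpose_mat A *\<^sub>v th_y t + y \<cdot>\<^sub>v c) (at t within {0..})"
    and th_u': "has_vec_derivative n th_u (transpose_mat A *\<^sub>v th_u t + u \<cdot>\<^sub>v c) (at t within {0..})"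
  defines "e \<equiv> \<lambda>s. (Ci * obsv_mat n (th_y s) A) *\<^sub>v b_y + (Ci * obsv_mat n (th_u s) A) *\<^sub>v b_u - x s"
  shows "has_vec_derivative n e (A *\<^sub>v e t) (at t within {0..})"
proof -
  define z where "z th b = (Ci * obsv_mat n th A) *\<^sub>v b" for th b
  have z: "z th b \<in> carrier_vec n" for th b
    unfolding z_def by (intro carrier_vecI) (simp add: carrier_matD(1)[OF Ci(1)])
  have zy: "has_vec_derivative n (\<lambda>s. z (th_y s) b_y) (A *\<^sub>v z (th_y t) b_y + y \<cdot>\<^sub>v b_y)
      (at t within {0..})"
    unfolding z_def by (rule observer_estimate_has_vec_derivative[OF A c b_y Ci th_y_dim t th_y'])
  have zu: "has_vec_derivative n (\<lambda>s. z (th_u s) b_u) (A *\<^sub>v z (th_u t) b_u + u \<cdot>\<^sub>v b_u)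
      (at t within {0..})"
    unfolding z_def by (rule observer_estimate_has_vec_derivative[OF A c b_u Ci th_u_dim t th_u'])
  have "has_vec_derivative n (\<lambda>s. z (th_y s) b_y + z (th_u s) b_u)
      ((A *\<^sub>v z (th_y t) b_y + y \<cdot>\<^sub>v b_y) + (A *\<^sub>v z (th_u t) b_u + u \<cdot>\<^sub>v b_u)) (at t within {0..})"
    using t z A b_u by (intro has_vec_derivative_add[OF zy zu]) auto
  from has_vec_derivative_diff[OF this x']
  have "has_vec_derivative n e ((A *\<^sub>v z (th_y t) b_y + y \<cdot>\<^sub>v b_y) + (A *\<^sub>v z (th_u t) b_u + u \<cdot>\<^sub>v b_u)
      - (A *\<^sub>v x t + y \<cdot>\<^sub>v b_y + u \<cdot>\<^sub>v b_u)) (at t within {0..})"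
    unfolding e_def z_def[symmetric] using t x_dim A b_y b_u by auto
  also have "(A *\<^sub>v z (th_y t) b_y + y \<cdot>\<^sub>v b_y) + (A *\<^sub>v z (th_u t) b_u + u \<cdot>\<^sub>v b_u)
      - (A *\<^sub>v x t + y \<cdot>\<^sub>v b_y + u \<cdot>\<^sub>v b_u) = A *\<^sub>v e t"
  proof -
    have "A *\<^sub>v e t = A *\<^sub>v z (th_y t) b_y + A *\<^sub>v z (th_u t) b_u - A *\<^sub>v x t"
      unfolding e_def z_def[symmetric] using A z x_dim t
      by (simp add: mult_minus_distrib_mat_vec[of _ n n] mult_add_distrib_mat_vec[of _ n n])
    then show ?thesis using A z x_dim t b_y b_u by (intro eq_vecI) auto
  qed
  finally show ?thesis .
qed

theorem lemma1:
  fixes n :: nat and ahat :: "nat \<Rightarrow> real"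
    and b_y b_u :: "real vec"
    and x th_y th_u :: "real \<Rightarrow> real vec"
    and u y :: "real \<Rightarrow> real"
  defines "A0 \<equiv> obs_canon n ahat"
    and "c0 \<equiv> c0_vec n"
  assumes n: "n \<ge> 1"
    and hur: "hurwitz A0"
    and by_dim: "b_y \<in> carrier_vec n" and bu_dim: "b_u \<in> carrier_vec n"
    and x_dim: "\<forall>t\<ge>0. x t \<in> carrier_vec n"
    and thy_dim: "\<forall>t\<ge>0. th_y t \<in> carrier_vec n"
    and thu_dim: "\<forall>t\<ge>0. th_u t \<in> carrier_vec n"
    and y_def: "\<forall>t\<ge>0. y t = c0 \<bullet> x t"
    and x_ode: "\<forall>t\<ge>0. \<forall>i<n. ((\<lambda>s. x s $ i) has_real_derivative
        (A0 *\<^sub>v x t + y t \<cdot>\<^sub>v b_y + u t \<cdot>\<^sub>v b_u) $ i) (at t within {0..})"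
    and thy_ode: "\<forall>t\<ge>0. \<forall>i<n. ((\<lambda>s. th_y s $ i) has_real_derivative
        (transpose_mat A0 *\<^sub>v th_y t + y t \<cdot>\<^sub>v c0) $ i) (at t within {0..})"
    and thu_ode: "\<forall>t\<ge>0. \<forall>i<n. ((\<lambda>s. th_u s $ i) has_real_derivative
        (transpose_mat A0 *\<^sub>v th_u t + u t \<cdot>\<^sub>v c0) $ i) (at t within {0..})"
  shows "\<exists>M \<alpha>. \<alpha> > 0 \<and> (\<forall>t\<ge>0. \<forall>i<n.
     \<bar>((mat_inv (obsv_mat n c0 A0) * transpose_mat (ctrb_mat n (transpose_mat A0) (th_y t))) *\<^sub>v b_y
      + (mat_inv (obsv_mat n c0 A0) * transpose_mat (ctrb_mat n (transpose_mat A0) (th_u t))) *\<^sub>v b_u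
      - x t) $ i\<bar> \<le> M * exp (- \<alpha> * t))"
proof -
  define Ci where "Ci = mat_inv (obsv_mat n c0 A0)"
  define e where "e t = (Ci * obsv_mat n (th_y t) A0) *\<^sub>v b_y + (Ci * obsv_mat n (th_u t) A0) *\<^sub>v b_u - x t"
    for t
  have A0: "A0 \<in> carrier_mat n n" and c0: "c0 \<in> carrier_vec n"
    by (simp_all add: A0_def c0_def obs_canon_carrier c0_vec_carrier)
  have Ci: "Ci \<in> carrier_mat n n" "Ci * obsv_mat n c0 A0 = 1\<^sub>m n"
    unfolding Ci_def A0_def c0_def by (rule mat_inv_obsv_mat_obs_canon)+
  have e_carrier: "e t \<in> carrier_vec n" if "t \<ge> 0" for t
    unfolding e_def using carrier_vecD[of "x t" n] x_dim that by (intro carrier_vecI) simp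
  have e': "has_vec_derivative n e (A0 *\<^sub>v e t) (at t within {0..})" if "t \<ge> 0" for t
    unfolding e_def[abs_def] using that x_dim thy_dim thu_dim x_ode thy_ode thu_ode
    by (intro observer_error_has_vec_derivative[OF A0 c0 Ci by_dim bu_dim, where y = "y t" and u = "u t"])
      (auto simp: has_vec_derivative_def)
  have "exp_decay (\<lambda>t. e t $ i)" if "i < n" for i
    using hurwitz_linear_ode_exp_decay[OF A0 hur e_carrier e' that] .
  then obtain M \<alpha> where "\<alpha> > 0" and "\<forall>t\<ge>0. \<forall>i\<in>{..<n}. norm (e t $ i) \<le> M * exp (- \<alpha> * t)"
    using exp_decay_uniform[of "{..<n}" "\<lambda>i t. e t $ i"] by auto
  then show ?thesis
    using thy_dim thu_dim
    by (intro exI[of _ M] exI[of _ \<alpha>]) (simp add: transpose_ctrb_mat[OF A0] e_def Ci_def)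
qed

end
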